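(* Let $m\geq 1$ and for each $i\geq 1$ let $\Lambda_i=a_1^{(i)}\mathbb{Z}\times a_2^{(i)}\mathbb{Z}\times\dots\times a_m^{(i)}\mathbb{Z}$ with $(a_1^{(i)},\dots,a_m^{(i)})\in\mathbb{N}^m\setminus\{(1,\dots,1)\}$. Let $\eta=\mathbb{1}_{\mathbb{Z}^m\setminus\bigcup_{i\geq1}\Lambda_i}\in\{0,1\}^{\mathbb{Z}^m}$ and $X_\eta$ its orbit closure. Then $(X_\eta,(S_{\mathbf{n}})_{\mathbf{n}\in\mathbb{Z}^m})$ is proximal if and only if $\{\Lambda_i\}_{i\geq1}$ contains an infinite subset of pairwise coprime lattices.
   Context: The shift on $\{0,1\}^{\mathbb{Z}^m}$ is $(S_{\mathbf{n}}x)_{\mathbf{g}}=x_{\mathbf{g}+\mathbf{n}}$; $X_\eta$ is the closure (product topology) of $\{S_{\mathbf{n}}\eta\}$. A system is proximal if every pair $(x,y)$ of its points satisfies $\liminf_{\mathbf{n}\to\infty}D(S_{\mathbf{n}}x,S_{\mathbf{n}}y)=0$ for a compatible metric $D$. Two proper subgroups $\Lambda,\Lambda'$ of $\mathbb{Z}^m$ are coprime if $\Lambda+\Lambda'=\mathbb{Z}^m$. *)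

theory Defs
  imports "HOL-Analysis.Analysis" "HOL-Library.Extended_Real"
begin

type_synonym ('m) config = "(int ^ 'm) \<Rightarrow> bool"

definition shift :: "int ^ 'm::finite \<Rightarrow> 'm config \<Rightarrow> 'm config" where
  "shift n x = (\<lambda>g. x (g + n))"

definition prod_top :: "'m::finite config topology" where
  "prod_top = product_topology (\<lambda>_. discrete_topology (UNIV :: bool set)) UNIV"

definition orbit_closure :: "'m::finite config \<Rightarrow> 'm config set" where
  "orbit_closure eta = prod_top closure_of (range (\<lambda>n. shift n eta))"

definition compatible_metric :: "'m::finite config set \<Rightarrow> ('m config \<Rightarrow> 'm config \<Rightarrow> real) \<Rightarrow> bool" where
  "compatible_metric X D \<longleftrightarrow>
     Metric_space X D \<and> Metric_space.mtopology X D = subtopology prod_top X"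

text \<open>Proximality: liminf over n \<rightarrow> \<infinity> in Z^m (cofinite filter) of D(S_n x, S_n y) is 0.\<close>
definition proximal :: "'m::finite config set \<Rightarrow> bool" where
  "proximal X \<longleftrightarrow> (\<exists>D. compatible_metric X D \<and>
     (\<forall>x\<in>X. \<forall>y\<in>X. Liminf cofinite (\<lambda>n. ereal (D (shift n x) (shift n y))) = 0))"

definition lattice_of :: "('m::finite \<Rightarrow> nat) \<Rightarrow> (int ^ 'm) set" where
  "lattice_of a = {v. \<forall>j. int (a j) dvd v $ j}"

definition coprime_lattices :: "(int ^ 'm::finite) set \<Rightarrow> (int ^ 'm) set \<Rightarrow> bool" where
  "coprime_lattices L L' \<longleftrightarrow> {x + y | x y. x \<in> L \<and> y \<in> L'} = UNIV"

end

theory Submission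
  imports Defs "HOL-Number_Theory.Cong"
begin

text \<open>If eta vanishes on infinitely many pairwise coprime lattices, every point of the orbit closure
  vanishes on a coset of each of them, so by the Chinese remainder theorem any two points can be
  shifted, for infinitely many shifts, to vanish simultaneously on a prescribed finite window; they
  are then proximal. Otherwise a maximal pairwise coprime subfamily is finite and every lattice
  fails to be coprime to one of its members; then eta and its translate by (1,...,1) differ in
  every translate of one fixed finite box, so they form a distal pair. Both directions use that on
  the compact orbit closure, closeness in a compatible metric amounts to agreement on large finite
  windows.\<close>

definition cylinder :: "(int ^ 'm::finite) set \<Rightarrow> 'm config \<Rightarrow> 'm config set" where
  "cylinder W p = {u. \<forall>g\<in>W. u g = p g}"

lemma topspace_prod_top [simp]: "topspace (prod_top :: 'm::finite config topology) = UNIV"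
  unfolding prod_top_def by (simp add: topspace_product_topology)

lemma openin_cylinder:
  assumes "finite W"
  shows "openin (prod_top :: 'm::finite config topology) (cylinder W p)"
  unfolding prod_top_def openin_product_topology_alt
proof
  fix x assume x: "x \<in> cylinder W p"
  define U where "U = (\<lambda>g. if g \<in> W then {p g} else (UNIV :: bool set))"
  have "{g. U g \<noteq> UNIV} \<subseteq> W"
    by (auto simp: U_def)
  then have "finite {g \<in> UNIV. U g \<noteq> topspace (discrete_topology UNIV)}"
    using assms finite_subset by auto
  moreover have "x \<in> Pi\<^sub>E UNIV U" "Pi\<^sub>E UNIV U \<subseteq> cylinder W p"
    using x by (auto simp: U_def cylinder_def PiE_def Pi_def)
  ultimately show "\<exists>U. finite {g \<in> UNIV. U g \<noteq> topspace (discrete_topology UNIV)} \<and>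
      (\<forall>g\<in>UNIV. openin (discrete_topology UNIV) (U g)) \<and> x \<in> Pi\<^sub>E UNIV U \<and> Pi\<^sub>E UNIV U \<subseteq> cylinder W p"
    by auto
qed

lemma openin_prod_top_cylinder_subset:
  assumes "openin (prod_top :: 'm::finite config topology) U" "p \<in> U"
  obtains W where "finite W" "cylinder W p \<subseteq> U"
proof -
  obtain V where V: "finite {g \<in> UNIV. V g \<noteq> topspace (discrete_topology (UNIV :: bool set))}"
     "p \<in> Pi\<^sub>E UNIV V" "Pi\<^sub>E UNIV V \<subseteq> U"
    using assms unfolding prod_top_def openin_product_topology_alt by blast
  have "cylinder {g. V g \<noteq> UNIV} p \<subseteq> Pi\<^sub>E UNIV V"
  proof
    fix u assume "u \<in> cylinder {g. V g \<noteq> UNIV} p"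
    then have "u g \<in> V g" for g
      using V(2) by (cases "V g = UNIV") (auto simp: cylinder_def PiE_def Pi_def)
    then show "u \<in> Pi\<^sub>E UNIV V"
      by auto
  qed
  with V show thesis
    by (intro that[of "{g. V g \<noteq> UNIV}"]) auto
qed

lemma shift_shift [simp]: "shift n (shift m x) = shift (m + n) x"
  by (simp add: shift_def ac_simps)

lemma shift_0 [simp]: "shift 0 x = x"
  by (simp add: shift_def)

lemma continuous_map_shift: "continuous_map prod_top prod_top (shift n :: 'm::finite config \<Rightarrow> _)"
  unfolding prod_top_def shift_def
  by (auto simp: continuous_map_componentwise_UNIV intro: continuous_map_product_projection)

lemma shift_in_orbit_closure:
  assumes "x \<in> orbit_closure eta"
  shows "shift n x \<in> orbit_closure eta"
proof -
  have "shift n ` orbit_closure eta \<subseteq> prod_top closure_of (shift n ` range (\<lambda>k. shift k eta))"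
    unfolding orbit_closure_def by (rule continuous_map_image_closure_subset[OF continuous_map_shift])
  also have "\<dots> \<subseteq> orbit_closure eta"
    unfolding orbit_closure_def by (rule closure_of_mono) auto
  finally show ?thesis
    using assms by blast
qed

lemma orbit_in_orbit_closure: "shift n eta \<in> orbit_closure eta"
  unfolding orbit_closure_def using closure_of_subset[of "range (\<lambda>k. shift k eta)" prod_top] by auto

lemma compactin_orbit_closure: "compactin prod_top (orbit_closure (eta :: 'm::finite config))"
proof -
  have "compact_space (prod_top :: 'm config topology)"
    unfolding prod_top_def by (simp add: compact_space_product_topology compact_space_discrete_topology)
  then show ?thesis
    unfolding orbit_closure_def by (simp add: closedin_compact_space)
qed

lemma compatible_metric_exists: "\<exists>D. compatible_metric X (D :: 'm::finite config \<Rightarrow> _)"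
proof -
  have "metrizable_space (prod_top :: 'm config topology)"
    unfolding prod_top_def metrizable_space_product_topology by simp
  then obtain M D where MD: "Metric_space M D"
    "subtopology (prod_top :: 'm config topology) X = Metric_space.mtopology M D"
    using metrizable_space_subtopology unfolding metrizable_space_def by metis
  have "M = X"
    using arg_cong[OF MD(2), of topspace] Metric_space.topspace_mtopology[OF MD(1)] by simp
  with MD show ?thesis
    unfolding compatible_metric_def by metis
qed

context
  fixes X :: "'m::finite config set" and D
  assumes compatible: "compatible_metric X D"
begin

interpretation Metric_space X D
  using compatible by (simp add: compatible_metric_def)

lemma compatible_metric_ball_contains_cylinder:
  assumes "p \<in> X" "e > 0"
  shows "\<exists>W. finite W \<and> (\<forall>u\<in>X. u \<in> cylinder W p \<longrightarrow> D p u < e)"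
proof -
  have "openin (subtopology prod_top X) (mball p e)"
    using compatible by (metis compatible_metric_def openin_mball)
  then obtain U where U: "openin prod_top U" "mball p e = U \<inter> X"
    by (auto simp: openin_subtopology)
  moreover have "p \<in> U"
    using U(2) assms by auto
  ultimately obtain W where W: "finite W" "cylinder W p \<subseteq> U"
    by (metis openin_prod_top_cylinder_subset)
  have "D p u < e" if "u \<in> X" "u \<in> cylinder W p" for u
  proof -
    have "u \<in> mball p e"
      using that W(2) U(2) by blast
    then show ?thesis
      by simp
  qed
  with W(1) show ?thesis
    by blast
qed

context
  assumes compact: "compactin prod_top X"
begin

lemma compatible_metric_close_imp_agree:
  assumes "finite W"
  obtains e where "e > 0" "\<And>u z. u \<in> X \<Longrightarrow> z \<in> X \<Longrightarrow> D u z < e \<Longrightarrow> z \<in> cylinder W u"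
proof -
  have compact_X: "compactin mtopology X"
    using compatible compact by (simp add: compatible_metric_def compactin_subtopology)
  define C where "C = (\<lambda>p. cylinder W p \<inter> X) ` X"
  have "openin mtopology U" if "U \<in> C" for U
    using that compatible openin_cylinder[OF assms]
    by (auto simp: C_def compatible_metric_def openin_subtopology)
  moreover have "X \<subseteq> \<Union>C"
    by (auto simp: C_def cylinder_def)
  ultimately obtain e where e: "e > 0" "\<And>x. x \<in> X \<Longrightarrow> \<exists>U\<in>C. mball x e \<subseteq> U"
    using lebesgue_number[OF compact_X] by metis
  show thesis
  proof (rule that[OF e(1)])
    fix u z assume "u \<in> X" "z \<in> X" "D u z < e"
    then have "u \<in> mball u e" "z \<in> mball u e"
      using e(1) by auto
    moreover obtain p where "mball u e \<subseteq> cylinder W p"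
      using e(2)[OF \<open>u \<in> X\<close>] by (auto simp: C_def)
    ultimately have "u \<in> cylinder W p" "z \<in> cylinder W p"
      by blast+
    then show "z \<in> cylinder W u"
      by (auto simp: cylinder_def)
  qed
qed

lemma compatible_metric_agree_imp_close:
  assumes "e > 0"
  obtains W where "finite W" "\<And>u z. u \<in> X \<Longrightarrow> z \<in> X \<Longrightarrow> z \<in> cylinder W u \<Longrightarrow> D u z < e"
proof -
  have windows: "\<forall>p\<in>X. \<exists>W. finite W \<and> (\<forall>u\<in>X. u \<in> cylinder W p \<longrightarrow> D p u < e / 2)"
    using compatible_metric_ball_contains_cylinder[of _ "e / 2"] assms by (simp del: divide_pos_pos)
  obtain Wp where "\<forall>p\<in>X. finite (Wp p) \<and> (\<forall>u\<in>X. u \<in> cylinder (Wp p) p \<longrightarrow> D p u < e / 2)"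
    using bchoice[OF windows] by blast
  then have Wp: "\<And>p. p \<in> X \<Longrightarrow> finite (Wp p)"
    "\<And>p u. p \<in> X \<Longrightarrow> u \<in> X \<Longrightarrow> u \<in> cylinder (Wp p) p \<Longrightarrow> D p u < e / 2"
    by blast+
  have "openin prod_top B" if "B \<in> (\<lambda>p. cylinder (Wp p) p) ` X" for B
    using that Wp(1) by (auto intro: openin_cylinder)
  moreover have "X \<subseteq> \<Union>((\<lambda>p. cylinder (Wp p) p) ` X)"
    by (auto simp: cylinder_def)
  ultimately obtain F where F: "finite F" "F \<subseteq> (\<lambda>p. cylinder (Wp p) p) ` X" "X \<subseteq> \<Union>F"
    using compactinD[OF compact, of "(\<lambda>p. cylinder (Wp p) p) ` X"] by blast
  then obtain P where P: "finite P" "P \<subseteq> X" "F = (\<lambda>p. cylinder (Wp p) p) ` P"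
    using finite_subset_image[OF F(1,2)] by blast
  have cover: "X \<subseteq> (\<Union>p\<in>P. cylinder (Wp p) p)"
    using F(3) P(3) by simp
  show thesis
  proof (rule that[of "\<Union>p\<in>P. Wp p"])
    show "finite (\<Union>p\<in>P. Wp p)"
      using P Wp(1) by auto
    fix u z assume uz: "u \<in> X" "z \<in> X" "z \<in> cylinder (\<Union>p\<in>P. Wp p) u"
    then obtain p where p: "p \<in> P" "u \<in> cylinder (Wp p) p"
      using cover by blast
    then have "z \<in> cylinder (Wp p) p"
      using uz(3) by (auto simp: cylinder_def)
    moreover have "p \<in> X"
      using p(1) P(2) by blast
    ultimately have "D p u < e / 2" "D p z < e / 2"
      using p(2) uz Wp(2) by blast+
    moreover have "D u z \<le> D p u + D p z"
      using triangle[OF \<open>u \<in> X\<close> \<open>p \<in> X\<close> \<open>z \<in> X\<close>] commute[of u p] by linarith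
    ultimately show "D u z < e"
      by linarith
  qed
qed

end

end

lemma Liminf_ereal_eq_0_iff:
  fixes f :: "'a \<Rightarrow> real"
  assumes nonneg: "\<And>x. 0 \<le> f x"
  shows "Liminf F (\<lambda>x. ereal (f x)) = 0 \<longleftrightarrow> (\<forall>e>0. \<exists>\<^sub>F x in F. f x < e)"
proof
  assume L: "Liminf F (\<lambda>x. ereal (f x)) = 0"
  show "\<forall>e>0. \<exists>\<^sub>F x in F. f x < e"
  proof (intro allI impI)
    fix e :: real assume "e > 0"
    then have "\<not> ereal e \<le> Liminf F (\<lambda>x. ereal (f x))"
      using L by simp
    then obtain y where "y < ereal e" and not_ev: "\<not> (\<forall>\<^sub>F x in F. y < ereal (f x))"
      unfolding le_Liminf_iff by blast
    from not_ev have "\<exists>\<^sub>F x in F. \<not> y < ereal (f x)"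
      unfolding not_eventually .
    moreover have "f x < e" if "\<not> y < ereal (f x)" for x
    proof -
      have "ereal (f x) \<le> y"
        using that by simp
      also note \<open>y < ereal e\<close>
      finally show ?thesis
        by simp
    qed
    ultimately show "\<exists>\<^sub>F x in F. f x < e"
      by (rule frequently_elim1)
  qed
next
  assume small: "\<forall>e>0. \<exists>\<^sub>F x in F. f x < e"
  have "0 \<le> Liminf F (\<lambda>x. ereal (f x))"
    by (rule Liminf_bounded) (simp add: nonneg)
  moreover have "\<not> 0 < Liminf F (\<lambda>x. ereal (f x))"
  proof
    assume "0 < Liminf F (\<lambda>x. ereal (f x))"
    then obtain e where e: "0 < ereal e" "ereal e < Liminf F (\<lambda>x. ereal (f x))"
      using ereal_dense2 by blast
    then have "\<forall>\<^sub>F x in F. ereal e < ereal (f x)"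
      using le_Liminf_iff[THEN iffD1, OF order_refl] by blast
    moreover have "\<exists>\<^sub>F x in F. f x < e"
      using small e(1) by simp
    ultimately have "\<exists>\<^sub>F x in F. False"
      by (rule frequently_eventually_conj[rotated, THEN frequently_elim1]) auto
    then show False
      by simp
  qed
  ultimately show "Liminf F (\<lambda>x. ereal (f x)) = 0"
    by simp
qed

lemma compatible_metric_Liminf_shift_eq_0_iff:
  assumes compatible: "compatible_metric X D" and compact: "compactin prod_top X"
    and orbits: "\<And>n. shift n x \<in> X" "\<And>n. shift n y \<in> X"
  shows "Liminf cofinite (\<lambda>n. ereal (D (shift n x) (shift n y))) = 0 \<longleftrightarrow>
    (\<forall>W. finite W \<longrightarrow> (\<exists>\<^sub>F n in cofinite. shift n y \<in> cylinder W (shift n x)))"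
proof -
  interpret Metric_space X D
    using compatible by (simp add: compatible_metric_def)
  show ?thesis
    unfolding Liminf_ereal_eq_0_iff[OF nonneg]
  proof (intro iffI allI impI)
    fix W :: "(int ^ 'a) set"
    assume small: "\<forall>e>0. \<exists>\<^sub>F n in cofinite. D (shift n x) (shift n y) < e" and "finite W"
    obtain e where "e > 0" and agree: "\<And>u z. u \<in> X \<Longrightarrow> z \<in> X \<Longrightarrow> D u z < e \<Longrightarrow> z \<in> cylinder W u"
      using compatible_metric_close_imp_agree[OF compatible compact \<open>finite W\<close>] by blast
    from small \<open>e > 0\<close> have "\<exists>\<^sub>F n in cofinite. D (shift n x) (shift n y) < e"
      by blast
    then show "\<exists>\<^sub>F n in cofinite. shift n y \<in> cylinder W (shift n x)"
      by (rule frequently_elim1) (rule agree[OF orbits])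
  next
    fix e :: real
    assume agree: "\<forall>W. finite W \<longrightarrow> (\<exists>\<^sub>F n in cofinite. shift n y \<in> cylinder W (shift n x))"
      and "e > 0"
    obtain W where "finite W" and close: "\<And>u z. u \<in> X \<Longrightarrow> z \<in> X \<Longrightarrow> z \<in> cylinder W u \<Longrightarrow> D u z < e"
      using compatible_metric_agree_imp_close[OF compatible compact \<open>e > 0\<close>] by blast
    from agree \<open>finite W\<close> have "\<exists>\<^sub>F n in cofinite. shift n y \<in> cylinder W (shift n x)"
      by blast
    then show "\<exists>\<^sub>F n in cofinite. D (shift n x) (shift n y) < e"
      by (rule frequently_elim1) (rule close[OF orbits])
  qed
qed

lemma proximal_orbit_closure_iff:
  "proximal (orbit_closure eta) \<longleftrightarrow>
    (\<forall>x\<in>orbit_closure eta. \<forall>y\<in>orbit_closure eta. \<forall>W. finite W \<longrightarrow>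
      (\<exists>\<^sub>F n in cofinite. \<forall>g\<in>W. x (g + n) = y (g + n)))"
proof -
  have cylinder_shift: "shift n y \<in> cylinder W (shift n x) \<longleftrightarrow> (\<forall>g\<in>W. x (g + n) = y (g + n))"
    for n W and x y :: "'a config"
    by (auto simp: cylinder_def shift_def)
  have "Liminf cofinite (\<lambda>n. ereal (D (shift n x) (shift n y))) = 0 \<longleftrightarrow>
      (\<forall>W. finite W \<longrightarrow> (\<exists>\<^sub>F n in cofinite. \<forall>g\<in>W. x (g + n) = y (g + n)))"
    if "compatible_metric (orbit_closure eta) D" "x \<in> orbit_closure eta" "y \<in> orbit_closure eta"
    for D x y
    unfolding compatible_metric_Liminf_shift_eq_0_iff[OF that(1) compactin_orbit_closure
        shift_in_orbit_closure[OF that(2)] shift_in_orbit_closure[OF that(3)]] cylinder_shift ..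
  moreover obtain D where "compatible_metric (orbit_closure eta) D"
    using compatible_metric_exists by blast
  ultimately show ?thesis
    unfolding proximal_def by meson
qed

lemma coprime_lattices_commute: "coprime_lattices L L' \<longleftrightarrow> coprime_lattices L' L"
proof -
  have "{x + y |x y. x \<in> L \<and> y \<in> L'} = {y + x |x y. x \<in> L \<and> y \<in> L'}"
    by (simp add: add.commute)
  then show ?thesis
    unfolding coprime_lattices_def by blast
qed

lemma coprime_lattices_iff:
  "coprime_lattices (lattice_of a) (lattice_of b) \<longleftrightarrow> (\<forall>j. coprime (a j) (b j))"
proof
  assume coprime: "coprime_lattices (lattice_of a) (lattice_of b)"
  show "\<forall>j. coprime (a j) (b j)"
  proof
    fix j
    obtain x y where xy: "axis j 1 = x + y" "x \<in> lattice_of a" "y \<in> lattice_of b"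
      using coprime unfolding coprime_lattices_def by blast
    then have sum: "x $ j + y $ j = 1"
      by (metis axis_nth vector_add_component)
    have dvd: "int (a j) dvd x $ j" "int (b j) dvd y $ j"
      using xy by (auto simp: lattice_of_def)
    have "coprime (int (a j)) (int (b j))"
    proof (rule coprimeI)
      fix c assume "c dvd int (a j)" "c dvd int (b j)"
      then have "c dvd x $ j + y $ j"
        using dvd by (meson dvd_add dvd_trans)
      then show "is_unit c"
        using sum by simp
    qed
    then show "coprime (a j) (b j)"
      by simp
  qed
next
  assume "\<forall>j. coprime (a j) (b j)"
  then have "\<forall>j. \<exists>s t. s * int (a j) + t * int (b j) = 1"
    by (metis bezout_int coprime_iff_gcd_eq_1 coprime_int_iff)
  then obtain s t where st: "\<And>j. s j * int (a j) + t j * int (b j) = 1"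
    by metis
  have "v \<in> {x + y |x y. x \<in> lattice_of a \<and> y \<in> lattice_of b}" for v :: "int ^ 'a"
  proof -
    have "v = (\<chi> j. s j * int (a j) * v $ j) + (\<chi> j. t j * int (b j) * v $ j)"
      by (simp add: vec_eq_iff distrib_right[symmetric] st)
    moreover have "(\<chi> j. s j * int (a j) * v $ j) \<in> lattice_of a" "(\<chi> j. t j * int (b j) * v $ j) \<in> lattice_of b"
      by (auto simp: lattice_of_def)
    ultimately show ?thesis
      by blast
  qed
  then show "coprime_lattices (lattice_of a) (lattice_of b)"
    unfolding coprime_lattices_def by blast
qed

lemma not_coprime_lattices_self:
  assumes "b \<noteq> (\<lambda>_. 1)"
  shows "\<not> coprime_lattices (lattice_of b) (lattice_of b)"
  using assms by (auto simp: coprime_lattices_iff fun_eq_iff)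

lemma not_in_lattice_if_not_coprime:
  assumes "\<not> coprime_lattices (lattice_of b) (lattice_of c)" "\<And>j. int (c j) dvd g $ j - 1"
  shows "g \<notin> lattice_of b"
proof
  assume "g \<in> lattice_of b"
  obtain j where "\<not> coprime (b j) (c j)"
    using assms(1) by (auto simp: coprime_lattices_iff)
  moreover have "coprime (g $ j) (int (c j))"
  proof (rule coprimeI)
    fix d assume "d dvd g $ j" "d dvd int (c j)"
    then have "d dvd g $ j - (g $ j - 1)"
      using assms(2) by (meson dvd_diff dvd_trans)
    then show "is_unit d"
      by simp
  qed
  moreover have "int (b j) dvd g $ j"
    using \<open>g \<in> lattice_of b\<close> by (simp add: lattice_of_def)
  ultimately show False
    using coprime_divisors[of "int (b j)" "g $ j" "int (c j)" "int (c j)"] by simp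
qed

lemma int_chinese_remainder:
  fixes m :: "'a \<Rightarrow> nat" and r :: "'a \<Rightarrow> int"
  assumes "finite A" "\<And>i. i \<in> A \<Longrightarrow> m i > 0"
    and "\<forall>i\<in>A. \<forall>j\<in>A. i \<noteq> j \<longrightarrow> coprime (m i) (m j)"
  shows "\<exists>x. \<forall>i\<in>A. int (m i) dvd x - r i"
proof -
  obtain x where x: "\<forall>i\<in>A. [x = nat (r i mod int (m i))] (mod m i)"
    using chinese_remainder_nat[OF assms(1,3), where u = "\<lambda>i. nat (r i mod int (m i))"] by blast
  have "[int x = r i] (mod int (m i))" if "i \<in> A" for i
  proof -
    have "[x = nat (r i mod int (m i))] (mod m i)"
      using x that by blast
    then have "[int x = int (nat (r i mod int (m i)))] (mod int (m i))"
      by (simp only: cong_int_iff)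
    also have "int (nat (r i mod int (m i))) = r i mod int (m i)"
      using assms(2)[OF that] by simp
    finally show ?thesis
      by simp
  qed
  then show ?thesis
    by (auto simp: cong_iff_dvd_diff)
qed

lemma infinite_lattice_chinese_remainder:
  fixes b :: "'k \<Rightarrow> 'm::finite \<Rightarrow> nat" and c :: "'k \<Rightarrow> int ^ 'm"
  assumes "finite K" "\<And>k j. k \<in> K \<Longrightarrow> b k j > 0"
    and "\<And>k k'. k \<in> K \<Longrightarrow> k' \<in> K \<Longrightarrow> k \<noteq> k' \<Longrightarrow> coprime_lattices (lattice_of (b k)) (lattice_of (b k'))"
  shows "infinite {n. \<forall>k\<in>K. n - c k \<in> lattice_of (b k)}"
proof -
  have "\<exists>x. \<forall>k\<in>K. int (b k j) dvd x - c k $ j" for j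
    using assms by (intro int_chinese_remainder) (auto simp: coprime_lattices_iff)
  then obtain x :: "'m \<Rightarrow> int" where x: "\<And>j k. k \<in> K \<Longrightarrow> int (b k j) dvd x j - c k $ j"
    by metis
  define P where "P j = (\<Prod>k\<in>K. int (b k j))" for j
  have "P j > 0" for j
    unfolding P_def using assms(2) by (simp add: prod_pos)
  define sol where "sol t = (\<chi> j. x j + int t * P j)" for t :: nat
  have "inj sol"
  proof (rule injI)
    fix t t' assume "sol t = sol t'"
    then have "sol t $ undefined = sol t' $ undefined"
      by simp
    then show "t = t'"
      using \<open>P undefined > 0\<close> by (simp add: sol_def)
  qed
  moreover have "range sol \<subseteq> {n. \<forall>k\<in>K. n - c k \<in> lattice_of (b k)}"
  proof clarify
    fix t k assume "k \<in> K"
    have "int (b k j) dvd (x j - c k $ j) + int t * P j" for j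
      using x[OF \<open>k \<in> K\<close>] dvd_prodI[OF assms(1) \<open>k \<in> K\<close>, of "\<lambda>k. int (b k j)"]
      by (simp add: P_def)
    then show "sol t - c k \<in> lattice_of (b k)"
      by (simp add: lattice_of_def sol_def algebra_simps)
  qed
  ultimately show ?thesis
    using range_inj_infinite infinite_super by blast
qed

definition residue_box :: "('m::finite \<Rightarrow> int) \<Rightarrow> (int ^ 'm) set" where
  "residue_box N = {w. \<forall>j. 0 \<le> w $ j \<and> w $ j < N j}"

lemma finite_residue_box: "finite (residue_box N)"
proof (rule finite_subset)
  show "residue_box N \<subseteq> vec_lambda ` Pi\<^sub>E UNIV (\<lambda>j. {0..<N j})"
  proof
    fix w assume "w \<in> residue_box N"
    then have "vec_nth w \<in> Pi\<^sub>E UNIV (\<lambda>j. {0..<N j})"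
      by (simp add: residue_box_def PiE_iff)
    then show "w \<in> vec_lambda ` Pi\<^sub>E UNIV (\<lambda>j. {0..<N j})"
      by (metis image_eqI vec_nth_inverse)
  qed
qed (intro finite_imageI finite_PiE; simp)

lemma residue_box_representative:
  assumes "\<And>j. N j > 0"
  shows "\<exists>w\<in>residue_box N. \<forall>j. N j dvd w $ j - r j"
proof
  show "(\<chi> j. r j mod N j) \<in> residue_box N"
    using assms by (simp add: residue_box_def)
  show "\<forall>j. N j dvd (\<chi> j. r j mod N j) $ j - r j"
    by (simp add: dvd_diff_commute)
qed

lemma orbit_closure_vanishes_on_coset:
  assumes x: "x \<in> orbit_closure eta" and b: "\<And>j. b j > 0"
    and vanish: "\<And>g. g \<in> lattice_of b \<Longrightarrow> \<not> eta g"
  shows "\<exists>c. \<forall>g\<in>lattice_of b. \<not> x (g + c)"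
proof (rule ccontr)
  assume "\<nexists>c. \<forall>g\<in>lattice_of b. \<not> x (g + c)"
  then have "\<forall>c. \<exists>h. h - c \<in> lattice_of b \<and> x h"
    by (metis add_diff_cancel_right')
  then obtain h where h: "\<And>c. h c - c \<in> lattice_of b" "\<And>c. x (h c)"
    by metis
  define B where "B = residue_box (\<lambda>j. int (b j))"
  have "openin prod_top (cylinder (h ` B) x)"
    unfolding B_def by (intro openin_cylinder finite_imageI finite_residue_box)
  moreover have "x \<in> cylinder (h ` B) x"
    by (simp add: cylinder_def)
  ultimately obtain t where t: "shift t eta \<in> cylinder (h ` B) x"
    using x unfolding orbit_closure_def in_closure_of by blast
  obtain c where "c \<in> B" and c: "\<forall>j. int (b j) dvd c $ j + t $ j"
    using residue_box_representative[of "\<lambda>j. int (b j)" "\<lambda>j. - t $ j"] b by (auto simp: B_def)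
  have "int (b j) dvd (h c $ j - c $ j) + (c $ j + t $ j)" for j
  proof (rule dvd_add)
    show "int (b j) dvd h c $ j - c $ j"
      using h(1)[of c] by (simp add: lattice_of_def)
  qed (use c in blast)
  then have "h c + t \<in> lattice_of b"
    by (simp add: lattice_of_def)
  then have "\<not> eta (h c + t)"
    by (rule vanish)
  moreover have "eta (h c + t) = x (h c)"
    using t \<open>c \<in> B\<close> by (auto simp: cylinder_def shift_def)
  ultimately show False
    using h(2) by simp
qed

text \<open>A cell is a point paired with a position. Since distinct cells carry coprime lattices, the
  Chinese remainder theorem moves all positions simultaneously into cosets on which the
  corresponding points vanish.\<close>

lemma frequently_vanish_at_cells:
  fixes K :: "('m::finite config \<times> (int ^ 'm)) set" and b :: "'m config \<times> (int ^ 'm) \<Rightarrow> 'm \<Rightarrow> nat"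
  assumes "finite K" and points: "\<And>\<kappa>. \<kappa> \<in> K \<Longrightarrow> fst \<kappa> \<in> orbit_closure eta"
    and b: "\<And>\<kappa> j. \<kappa> \<in> K \<Longrightarrow> b \<kappa> j > 0"
    and coprime: "\<And>\<kappa> \<kappa>'. \<kappa> \<in> K \<Longrightarrow> \<kappa>' \<in> K \<Longrightarrow> \<kappa> \<noteq> \<kappa>' \<Longrightarrow>
      coprime_lattices (lattice_of (b \<kappa>)) (lattice_of (b \<kappa>'))"
    and vanish: "\<And>\<kappa> g. \<kappa> \<in> K \<Longrightarrow> g \<in> lattice_of (b \<kappa>) \<Longrightarrow> \<not> eta g"
  shows "\<exists>\<^sub>F n in cofinite. \<forall>\<kappa>\<in>K. \<not> fst \<kappa> (snd \<kappa> + n)"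
proof -
  have cosets: "\<forall>\<kappa>\<in>K. \<exists>c. \<forall>g\<in>lattice_of (b \<kappa>). \<not> fst \<kappa> (g + c)"
    using orbit_closure_vanishes_on_coset points b vanish by metis
  obtain c where c: "\<forall>\<kappa>\<in>K. \<forall>g\<in>lattice_of (b \<kappa>). \<not> fst \<kappa> (g + c \<kappa>)"
    using bchoice[OF cosets] by blast
  have "infinite {n. \<forall>\<kappa>\<in>K. n - (c \<kappa> - snd \<kappa>) \<in> lattice_of (b \<kappa>)}"
    by (rule infinite_lattice_chinese_remainder[OF \<open>finite K\<close> b coprime])
  moreover have "{n. \<forall>\<kappa>\<in>K. n - (c \<kappa> - snd \<kappa>) \<in> lattice_of (b \<kappa>)} \<subseteq> {n. \<forall>\<kappa>\<in>K. \<not> fst \<kappa> (snd \<kappa> + n)}"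
  proof
    fix n assume "n \<in> {n. \<forall>\<kappa>\<in>K. n - (c \<kappa> - snd \<kappa>) \<in> lattice_of (b \<kappa>)}"
    then have "\<not> fst \<kappa> ((n - (c \<kappa> - snd \<kappa>)) + c \<kappa>)" if "\<kappa> \<in> K" for \<kappa>
      using c that by blast
    moreover have "n - (c \<kappa> - snd \<kappa>) + c \<kappa> = snd \<kappa> + n" for \<kappa>
      by (simp add: algebra_simps)
    ultimately show "n \<in> {n. \<forall>\<kappa>\<in>K. \<not> fst \<kappa> (snd \<kappa> + n)}"
      by simp
  qed
  ultimately show ?thesis
    unfolding frequently_cofinite using infinite_super by blast
qed

lemma frequently_vanish_on_window:
  assumes S: "infinite S" "pairwise coprime_lattices S"
    and lattices: "\<And>L. L \<in> S \<Longrightarrow> \<exists>b. L = lattice_of b \<and> (\<forall>j. b j > 0)"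
    and vanish: "\<And>L g. L \<in> S \<Longrightarrow> g \<in> L \<Longrightarrow> \<not> eta g"
    and P: "finite P" "P \<subseteq> orbit_closure eta" and "finite W"
  shows "\<exists>\<^sub>F n in cofinite. \<forall>p\<in>P. \<forall>g\<in>W. \<not> p (g + n)"
proof -
  have "finite (P \<times> W)"
    using P(1) \<open>finite W\<close> by simp
  moreover obtain T where T: "finite T" "card T = card (P \<times> W)" "T \<subseteq> S"
    using infinite_arbitrarily_large[OF S(1)] by blast
  ultimately obtain lat where "lat ` (P \<times> W) \<subseteq> T" "inj_on lat (P \<times> W)"
    using card_le_inj[of "P \<times> W" T] by auto
  with T(3) have lat: "lat ` (P \<times> W) \<subseteq> S" "inj_on lat (P \<times> W)"
    by auto
  then have "\<forall>\<kappa>\<in>P \<times> W. \<exists>b. lat \<kappa> = lattice_of b \<and> (\<forall>j. b j > 0)"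
    using lattices by blast
  then obtain b where b: "\<And>\<kappa>. \<kappa> \<in> P \<times> W \<Longrightarrow> lat \<kappa> = lattice_of (b \<kappa>)"
    "\<And>\<kappa> j. \<kappa> \<in> P \<times> W \<Longrightarrow> b \<kappa> j > 0"
    by metis
  have coprime: "coprime_lattices (lattice_of (b \<kappa>)) (lattice_of (b \<kappa>'))"
    if "\<kappa> \<in> P \<times> W" "\<kappa>' \<in> P \<times> W" "\<kappa> \<noteq> \<kappa>'" for \<kappa> \<kappa>'
  proof -
    have "lat \<kappa> \<in> S" "lat \<kappa>' \<in> S" "lat \<kappa> \<noteq> lat \<kappa>'"
      using lat that unfolding inj_on_def by blast+
    then show ?thesis
      using S(2) b(1) that unfolding pairwise_def by metis
  qed
  have points: "fst \<kappa> \<in> orbit_closure eta" if "\<kappa> \<in> P \<times> W" for \<kappa>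
    using that P(2) by auto
  have vanish_b: "\<not> eta g" if "\<kappa> \<in> P \<times> W" "g \<in> lattice_of (b \<kappa>)" for \<kappa> g
  proof -
    have "lat \<kappa> \<in> S"
      using lat(1) that(1) by blast
    moreover have "g \<in> lat \<kappa>"
      using b(1)[OF that(1)] that(2) by simp
    ultimately show ?thesis
      by (rule vanish)
  qed
  have "\<exists>\<^sub>F n in cofinite. \<forall>\<kappa>\<in>P \<times> W. \<not> fst \<kappa> (snd \<kappa> + n)"
    by (rule frequently_vanish_at_cells[OF \<open>finite (P \<times> W)\<close> points b(2) coprime vanish_b])
  then show ?thesis
    by (rule frequently_elim1) auto
qed

lemma proximal_orbit_closure_if_pairwise_coprime:
  assumes "infinite S" "pairwise coprime_lattices S"
    and "\<And>L. L \<in> S \<Longrightarrow> \<exists>b. L = lattice_of b \<and> (\<forall>j. b j > 0)"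
    and "\<And>L g. L \<in> S \<Longrightarrow> g \<in> L \<Longrightarrow> \<not> eta g"
  shows "proximal (orbit_closure eta)"
  unfolding proximal_orbit_closure_iff
proof (intro ballI allI impI)
  fix x y and W :: "(int ^ 'a) set"
  assume "x \<in> orbit_closure eta" "y \<in> orbit_closure eta" "finite W"
  then have "\<exists>\<^sub>F n in cofinite. \<forall>p\<in>{x, y}. \<forall>g\<in>W. \<not> p (g + n)"
    by (intro frequently_vanish_on_window[OF assms]) auto
  then show "\<exists>\<^sub>F n in cofinite. \<forall>g\<in>W. x (g + n) = y (g + n)"
    by (rule frequently_elim1) simp
qed

lemma pairwise_Union_chain:
  assumes "chain\<^sub>\<subseteq> C" "\<And>S. S \<in> C \<Longrightarrow> pairwise R S"
  shows "pairwise R (\<Union>C)"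
proof (rule pairwiseI)
  fix x y assume "x \<in> \<Union>C" "y \<in> \<Union>C" "x \<noteq> y"
  then obtain S S' where "x \<in> S" "y \<in> S'" "S \<in> C" "S' \<in> C"
    by blast
  moreover from \<open>S \<in> C\<close> \<open>S' \<in> C\<close> have "S \<subseteq> S' \<or> S' \<subseteq> S"
    using assms(1) by (auto simp: chain_subset_def)
  ultimately show "R x y"
    using assms(2) \<open>x \<noteq> y\<close> by (auto simp: pairwise_def)
qed

lemma finite_maximal_pairwise:
  assumes sym: "\<And>x y. R x y \<Longrightarrow> R y x" and irrefl: "\<And>x. x \<in> A \<Longrightarrow> \<not> R x x"
    and finite_cliques: "\<And>S. S \<subseteq> A \<Longrightarrow> pairwise R S \<Longrightarrow> finite S"
  obtains F where "F \<subseteq> A" "finite F" "\<And>x. x \<in> A \<Longrightarrow> \<exists>y\<in>F. \<not> R x y"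
proof -
  define \<C> where "\<C> = {S. S \<subseteq> A \<and> pairwise R S}"
  have "\<Union>C \<in> \<C>" if "C \<in> chains \<C>" for C
    using that pairwise_Union_chain[of C R] by (auto simp: chains_def \<C>_def)
  then obtain M where "M \<in> \<C>" and maximal: "\<And>S. S \<in> \<C> \<Longrightarrow> M \<subseteq> S \<Longrightarrow> S = M"
    using Zorn_Lemma[of \<C>] by blast
  then have M: "M \<subseteq> A" "pairwise R M"
    by (auto simp: \<C>_def)
  show thesis
  proof (rule that[OF M(1) finite_cliques[OF M]])
    fix x assume "x \<in> A"
    show "\<exists>y\<in>M. \<not> R x y"
    proof (cases "x \<in> M")
      case True
      then show ?thesis
        using irrefl \<open>x \<in> A\<close> by blast
    next
      case False
      show ?thesis
      proof (rule ccontr)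
        assume "\<not> (\<exists>y\<in>M. \<not> R x y)"
        then have "insert x M \<in> \<C>"
          using M \<open>x \<in> A\<close> sym by (auto simp: \<C>_def pairwise_insert)
        then show False
          using maximal[of "insert x M"] False by blast
      qed
    qed
  qed
qed

text \<open>If every lattice fails to be coprime to one of finitely many lattices, then eta equals 1 at
  all points congruent to 1 modulo the product of their moduli; multiplying by the moduli of one
  lattice as well makes eta vanish one step back.\<close>

lemma shift_separated_window:
  fixes a :: "nat \<Rightarrow> 'm::finite \<Rightarrow> nat"
  assumes pos: "\<And>i j. a i j > 0"
    and eta_def: "eta = (\<lambda>g. g \<notin> (\<Union>i. lattice_of (a i)))"
    and "finite I"
    and blocked: "\<And>i. \<exists>k\<in>I. \<not> coprime_lattices (lattice_of (a i)) (lattice_of (a k))"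
  shows "\<exists>W. finite W \<and> (\<forall>n. \<exists>g\<in>W. eta (g + n) \<noteq> shift (- 1) eta (g + n))"
proof (intro exI conjI allI)
  define N where "N j = (\<Prod>k\<in>insert 0 I. int (a k j))" for j
  have N_pos: "N j > 0" for j
    unfolding N_def using pos by (simp add: prod_pos)
  have dvd_N: "int (a k j) dvd N j" if "k \<in> insert 0 I" for k j
    unfolding N_def using \<open>finite I\<close> that by (intro dvd_prodI) auto
  show "finite (residue_box N)"
    by (rule finite_residue_box)
  fix n
  have "\<exists>w\<in>residue_box N. \<forall>j. N j dvd w $ j - (1 - n $ j)"
    using N_pos by (rule residue_box_representative)
  then obtain w where "w \<in> residue_box N" and w': "\<forall>j. N j dvd w $ j - (1 - n $ j)"
    by blast
  have w: "N j dvd (w + n) $ j - 1" for j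
    using w' by (simp add: algebra_simps)
  have "w + n \<notin> lattice_of (a i)" for i
  proof -
    obtain k where "k \<in> I" and not_coprime: "\<not> coprime_lattices (lattice_of (a i)) (lattice_of (a k))"
      using blocked by blast
    have "int (a k j) dvd (w + n) $ j - 1" for j
      using dvd_N[of k j] w[of j] \<open>k \<in> I\<close> by (auto intro: dvd_trans)
    with not_coprime show ?thesis
      by (rule not_in_lattice_if_not_coprime)
  qed
  then have "eta (w + n)"
    by (simp add: eta_def)
  moreover have "w + n + - 1 \<in> lattice_of (a 0)"
    using dvd_N[of 0] w by (auto simp: lattice_of_def intro: dvd_trans)
  then have "\<not> shift (- 1) eta (w + n)"
    by (auto simp: eta_def shift_def)
  ultimately show "\<exists>g\<in>residue_box N. eta (g + n) \<noteq> shift (- 1) eta (g + n)"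
    using \<open>w \<in> residue_box N\<close> by auto
qed

lemma not_proximal_orbit_closure_if_blocked:
  fixes a :: "nat \<Rightarrow> 'm::finite \<Rightarrow> nat"
  assumes "\<And>i j. a i j > 0"
    and eta_def: "eta = (\<lambda>g. g \<notin> (\<Union>i. lattice_of (a i)))"
    and "finite I"
    and "\<And>i. \<exists>k\<in>I. \<not> coprime_lattices (lattice_of (a i)) (lattice_of (a k))"
  shows "\<not> proximal (orbit_closure eta)"
proof
  assume prox: "proximal (orbit_closure eta)"
  obtain W where "finite W" and separated: "\<forall>n. \<exists>g\<in>W. eta (g + n) \<noteq> shift (- 1) eta (g + n)"
    using shift_separated_window[OF assms] by blast
  have "eta \<in> orbit_closure eta" "shift (- 1) eta \<in> orbit_closure eta"
    using orbit_in_orbit_closure[of 0 eta] orbit_in_orbit_closure by auto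
  with prox \<open>finite W\<close> have "\<exists>\<^sub>F n in cofinite. \<forall>g\<in>W. eta (g + n) = shift (- 1) eta (g + n)"
    unfolding proximal_orbit_closure_iff by blast
  then show False
    using separated by (auto dest: frequently_ex)
qed

lemma finite_blocking_lattices:
  fixes a :: "nat \<Rightarrow> 'm::finite \<Rightarrow> nat"
  assumes nontriv: "\<And>i. a i \<noteq> (\<lambda>_. 1)"
    and no_family: "\<not> (\<exists>S\<subseteq>range (\<lambda>i. lattice_of (a i)). infinite S \<and> pairwise coprime_lattices S)"
  obtains I where "finite I" "\<And>i. \<exists>k\<in>I. \<not> coprime_lattices (lattice_of (a i)) (lattice_of (a k))"
proof -
  let ?R = "range (\<lambda>i. lattice_of (a i))"
  have irrefl: "\<not> coprime_lattices L L" if "L \<in> ?R" for L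
    using that not_coprime_lattices_self[OF nontriv] by blast
  have finite_families: "finite S" if "S \<subseteq> ?R" "pairwise coprime_lattices S" for S
    using no_family that by blast
  obtain F where "F \<subseteq> ?R" "finite F"
    and blocked: "\<And>L. L \<in> ?R \<Longrightarrow> \<exists>L'\<in>F. \<not> coprime_lattices L L'"
    using finite_maximal_pairwise[of coprime_lattices ?R,
        OF coprime_lattices_commute[THEN iffD1] irrefl finite_families] by blast
  then obtain I where "finite I" and F_def: "F = (\<lambda>i. lattice_of (a i)) ` I"
    using finite_subset_image by metis
  have "\<exists>k\<in>I. \<not> coprime_lattices (lattice_of (a i)) (lattice_of (a k))" for i
    using blocked[of "lattice_of (a i)"] unfolding F_def by blast
  with \<open>finite I\<close> show thesis
    by (rule that)
qed

theorem corollary1p3: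
  fixes a :: "nat \<Rightarrow> 'm::finite \<Rightarrow> nat"
    and eta :: "'m config"
  assumes pos: "\<And>i j. a i j \<ge> 1"
    and nontriv: "\<And>i. a i \<noteq> (\<lambda>_. 1)"
    and eta_def: "eta = (\<lambda>g. g \<notin> (\<Union>i. lattice_of (a i)))"
  shows "proximal (orbit_closure eta) \<longleftrightarrow>
    (\<exists>S. S \<subseteq> range (\<lambda>i. lattice_of (a i)) \<and> infinite S \<and>
         (\<forall>L\<in>S. \<forall>L'\<in>S. L \<noteq> L' \<longrightarrow> coprime_lattices L L'))"
  (is "_ \<longleftrightarrow> (\<exists>S. S \<subseteq> ?R \<and> _)")
proof -
  have a_pos: "a i j > 0" for i j
    using pos[of i j] by simp
  have "proximal (orbit_closure eta) \<longleftrightarrow> (\<exists>S\<subseteq>?R. infinite S \<and> pairwise coprime_lattices S)"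
  proof
    assume "\<exists>S\<subseteq>?R. infinite S \<and> pairwise coprime_lattices S"
    then obtain S where "S \<subseteq> ?R" "infinite S" "pairwise coprime_lattices S"
      by blast
    then show "proximal (orbit_closure eta)"
      using a_pos eta_def by (intro proximal_orbit_closure_if_pairwise_coprime) blast+
  next
    assume prox: "proximal (orbit_closure eta)"
    show "\<exists>S\<subseteq>?R. infinite S \<and> pairwise coprime_lattices S"
    proof (rule ccontr)
      assume no_family: "\<not> ?thesis"
      obtain I where "finite I"
        and blocked: "\<And>i. \<exists>k\<in>I. \<not> coprime_lattices (lattice_of (a i)) (lattice_of (a k))"
        using finite_blocking_lattices[OF nontriv no_family] by metis
      with prox show False
        using not_proximal_orbit_closure_if_blocked[OF a_pos eta_def \<open>finite I\<close> blocked] by blast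
    qed
  qed
  then show ?thesis
    by (simp add: pairwise_def)
qed

end
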